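(* Let $\alpha<1$ be a real number. Let $P_1$ be a set of primes with $P_1(X)\ge c\frac{\sqrt{X}}{(\log X)^{\alpha}}$ for all sufficiently large real $X$, where $c>0$ is a constant. Then for any integer $k\ge 2$, $$P_1^k(X)\ge c_1\sqrt{X}(\log X)^{k-1-k\alpha}$$ for all sufficiently large $X$, where $c_1>0$ is a constant depending only on $c$ and $k$.
   Context: $P_1^1=P_1$, $P_1^k=P_1P_1^{k-1}$ where $AB=\{ab:a\in A,b\in B\}$; for $S\subset\mathbb{N}_0$, $S(X)=|S\cap[1,X]|$. *)

theory Defs
  imports Complex_Main "HOL-Number_Theory.Number_Theory"
begin

definition setmul :: "nat set \<Rightarrow> nat set \<Rightarrow> nat set" where
  "setmul A B = {a * b | a b. a \<in> A \<and> b \<in> B}"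

text \<open>Iterated product set: setpow A 1 = A, setpow A k = A (setpow A (k-1)).
  (setpow A 0 = {1} is only a convenient base case.)\<close>
fun setpow :: "nat set \<Rightarrow> nat \<Rightarrow> nat set" where
  "setpow A 0 = {1}"
| "setpow A (Suc k) = setmul A (setpow A k)"

definition count_upto :: "nat set \<Rightarrow> real \<Rightarrow> nat" where
  "count_upto S X = card {n \<in> S. 1 \<le> n \<and> real n \<le> X}"

end

theory Submission
  imports Defs
begin

text \<open>An element of P_1^k has at most k distinct prime factors, so each
  n \<le> X in P_1^k = P_1 P_1^(k-1) arises from at most k pairs (p, q). Counting the pairs with
  p \<le> \<surd>X gives k P_1^k(X) \<ge> \<Sum>_{p \<le> \<surd>X} P_1^(k-1)(X/p), which by induction is at
  least a constant times \<surd>X (ln X)^(k-2-(k-1)\<alpha>) \<Sum>_{p \<le> \<surd>X} 1/\<surd>p. Partial summation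
  turns the hypothesis on P_1(X) into \<Sum>_{p \<le> N} 1/\<surd>p \<ge> d (ln N)^(1-\<alpha>), where \<alpha> < 1
  is used.\<close>

lemma setpow_one: "setpow P 1 = P"
  by (auto simp: setmul_def)

lemma card_prime_factors_setpow_le:
  assumes "\<forall>p\<in>P. prime p" and "n \<in> setpow P m"
  shows "card (prime_factors n) \<le> m"
  using assms(2)
proof (induction m arbitrary: n)
  case 0
  then show ?case by simp
next
  case (Suc m)
  then obtain p q where n: "n = p * q" and "p \<in> P" and q: "q \<in> setpow P m"
    by (auto simp: setmul_def)
  then have p: "prime p" using assms(1) by auto
  show ?case
  proof (cases "q = 0")
    case False
    then have "prime_factors n = insert p (prime_factors q)"
      using n p by (simp add: prime_factors_product prime_prime_factors prime_gt_0_nat)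
    then show ?thesis using Suc.IH[OF q] by (simp add: card_insert_if)
  qed (use n in simp)
qed

lemma card_le_mult_card_image:
  assumes "finite T" and "\<And>y. card {x\<in>T. f x = y} \<le> k"
  shows "card T \<le> k * card (f ` T)"
proof -
  have "T = (\<Union>y\<in>f ` T. {x\<in>T. f x = y})" by auto
  then have "card T = (\<Sum>y\<in>f ` T. card {x\<in>T. f x = y})"
    using assms(1) by (subst card_UN_disjoint[symmetric]) auto
  also have "\<dots> \<le> (\<Sum>y\<in>f ` T. k)" by (rule sum_mono) (rule assms(2))
  finally show ?thesis by (simp add: mult.commute)
qed

lemma finite_count_upto_set: "finite {n \<in> S. 1 \<le> n \<and> real n \<le> X}"
proof (rule finite_subset)
  show "{n \<in> S. 1 \<le> n \<and> real n \<le> X} \<subseteq> {..nat \<lfloor>X\<rfloor>}"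
    by (auto simp: le_nat_floor)
qed simp

lemma count_upto_of_nat: "count_upto S (real n) = card (S \<inter> {1..n})"
  unfolding count_upto_def by (rule arg_cong[where f = card]) auto

text \<open>Each n counted on the right has at most m representations n = p q with p \<in> P,
  one for each prime factor p of n.\<close>
lemma sum_count_upto_le_count_upto_setmul:
  assumes primes: "\<forall>p\<in>P. prime p"
    and factors: "\<forall>n\<in>setmul P Q. card (prime_factors n) \<le> m"
    and "finite A" and "A \<subseteq> P"
  shows "(\<Sum>p\<in>A. count_upto Q (X / real p)) \<le> m * count_upto (setmul P Q) X"
proof -
  define T where "T = Sigma A (\<lambda>p. {q \<in> Q. 1 \<le> q \<and> real q \<le> X / real p})"
  define g where "g = (\<lambda>(p::nat, q::nat). p * q)"
  have card_T: "card T = (\<Sum>p\<in>A. count_upto Q (X / real p))"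
    unfolding T_def count_upto_def using \<open>finite A\<close> finite_count_upto_set
    by (subst card_SigmaI) auto
  have image: "g ` T \<subseteq> {n \<in> setmul P Q. 1 \<le> n \<and> real n \<le> X}"
  proof
    fix n assume "n \<in> g ` T"
    then obtain p q where pq: "p \<in> P" "q \<in> Q" "1 \<le> q" "real q \<le> X / real p" "n = p * q"
      using \<open>A \<subseteq> P\<close> unfolding T_def g_def by auto
    have "p > 0" using primes pq(1) prime_gt_0_nat by blast
    then have "real p * real q \<le> X" using pq(4) by (simp add: field_simps)
    then show "n \<in> {n \<in> setmul P Q. 1 \<le> n \<and> real n \<le> X}"
      using pq \<open>p > 0\<close> by (auto simp: setmul_def)
  qed
  have fiber: "card {t \<in> T. g t = n} \<le> m" for n
  proof (cases "n \<in> g ` T")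
    case True
    have "{t \<in> T. g t = n} \<subseteq> (\<lambda>p. (p, n div p)) ` prime_factors n"
    proof
      fix t assume "t \<in> {t \<in> T. g t = n}"
      then obtain p q where t: "t = (p, q)" "p \<in> P" "1 \<le> q" "p * q = n"
        using \<open>A \<subseteq> P\<close> unfolding T_def g_def by auto
      have "prime p" using primes t(2) by auto
      then have "p \<in> prime_factors n" and "q = n div p"
        using t by (auto simp: in_prime_factors_iff prime_gt_0_nat)
      then show "t \<in> (\<lambda>p. (p, n div p)) ` prime_factors n" using t(1) by auto
    qed
    then have "card {t \<in> T. g t = n} \<le> card (prime_factors n)"
      by (meson card_image_le card_mono finite_imageI finite_set_mset le_trans)
    also have "\<dots> \<le> m" using True image factors by auto
    finally show ?thesis .
  next
    case False
    then have "{t \<in> T. g t = n} = {}" by blast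
    then show ?thesis by (simp only: card.empty le0)
  qed
  have "finite T" unfolding T_def using \<open>finite A\<close> finite_count_upto_set by blast
  then have "card T \<le> m * card (g ` T)" using fiber by (rule card_le_mult_card_image)
  also have "card (g ` T) \<le> count_upto (setmul P Q) X"
    unfolding count_upto_def by (rule card_mono[OF finite_count_upto_set image])
  finally show ?thesis using card_T by simp
qed

lemma sum_by_parts_count:
  fixes f :: "nat \<Rightarrow> real"
  shows "(\<Sum>p\<in>P \<inter> {1..N}. f p) =
    card (P \<inter> {1..N}) * f N + (\<Sum>n<N. card (P \<inter> {1..n}) * (f n - f (Suc n)))"
proof (induction N)
  case (Suc N)
  have split: "P \<inter> {1..Suc N} = (if Suc N \<in> P then insert (Suc N) (P \<inter> {1..N}) else P \<inter> {1..N})"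
    by (auto simp: le_Suc_eq)
  show ?case
    using Suc.IH unfolding split by (simp add: algebra_simps)
qed simp

lemma inverse_sqrt_diff_ge:
  assumes "n \<ge> 1"
  shows "1 / (2 * real (Suc n) * sqrt (real n)) \<le> 1 / sqrt (real n) - 1 / sqrt (real (Suc n))"
proof -
  define a where "a = sqrt (real n)"
  define b where "b = sqrt (real (Suc n))"
  have a: "a > 0" using assms by (simp add: a_def)
  have ab: "a < b" by (simp add: a_def b_def)
  have "(b - a) * (b + a) = 1" by (simp add: a_def b_def algebra_simps)
  then have "b - a = 1 / (b + a)" using a ab by (simp add: field_simps)
  also have "\<dots> \<ge> 1 / (2 * b)" using a ab by (simp add: frac_le)
  finally have "1 / (2 * b) / (a * b) \<le> (b - a) / (a * b)"
    using a ab by (intro divide_right_mono) auto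
  moreover have "1 / (2 * real (Suc n) * a) = 1 / (2 * b) / (a * b)"
    using a by (simp add: b_def field_simps)
  moreover have "(b - a) / (a * b) = 1 / a - 1 / b" using a ab by (simp add: field_simps)
  ultimately have "1 / (2 * real (Suc n) * a) \<le> 1 / a - 1 / b" by linarith
  then show ?thesis by (simp add: a_def b_def)
qed

lemma ln_diff_le_sum_inverse_Suc:
  assumes "M \<le> N"
  shows "ln (real N + 1) - ln (real M + 1) \<le> (\<Sum>n\<in>{M..<N}. 1 / real (Suc n))"
  using assms
proof (induction N rule: dec_induct)
  case (step N)
  have "1 + 1 / (real N + 1) = (real (Suc N) + 1) / (real N + 1)" by (simp add: field_simps)
  then have "ln (real (Suc N) + 1) - ln (real N + 1) = ln (1 + 1 / (real N + 1))"
    by (simp add: ln_div)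
  also have "\<dots> \<le> 1 / (real N + 1)" by (rule ln_add_one_self_le_self) simp
  finally show ?case using step.IH step.hyps by (simp add: add.commute)
qed simp

lemma powr_le_max_powr_of_half_le:
  fixes u v a :: real
  assumes "0 < v" "v / 2 \<le> u" "u \<le> v"
  shows "u powr a \<le> max 1 (2 powr (-a)) * v powr a"
proof (cases "a \<ge> 0")
  case True
  then have "u powr a \<le> 1 * v powr a" using assms by (simp add: powr_mono2)
  also have "\<dots> \<le> max 1 (2 powr (-a)) * v powr a" by (intro mult_right_mono) auto
  finally show ?thesis .
next
  case False
  then have "u powr a \<le> (v / 2) powr a" using assms by (intro powr_mono2') auto
  also have "\<dots> = 2 powr (-a) * v powr a" using assms by (simp add: powr_divide powr_minus_divide)
  also have "\<dots> \<le> max 1 (2 powr (-a)) * v powr a" by (intro mult_right_mono) auto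
  finally show ?thesis .
qed

lemma min_powr_le_powr_of_half_le:
  fixes u v a :: real
  assumes "0 < v" "v / 2 \<le> u" "u \<le> v"
  shows "min 1 (2 powr (-a)) * v powr a \<le> u powr a"
proof (cases "a \<ge> 0")
  case True
  have "min 1 (2 powr (-a)) * v powr a \<le> 2 powr (-a) * v powr a" by (intro mult_right_mono) auto
  also have "\<dots> = (v / 2) powr a" using assms by (simp add: powr_divide powr_minus_divide)
  also have "\<dots> \<le> u powr a" using True assms by (intro powr_mono2) auto
  finally show ?thesis .
next
  case False
  have "min 1 (2 powr (-a)) * v powr a \<le> 1 * v powr a" by (intro mult_right_mono) auto
  also have "\<dots> \<le> u powr a" using False assms by (simp add: powr_mono2')
  finally show ?thesis .
qed

lemma sum_inverse_Suc_from_sqrt_ge: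
  fixes N :: nat
  assumes "N \<ge> 16"
  shows "ln (real N) / 4 \<le> (\<Sum>n\<in>{nat \<lceil>sqrt (real N)\<rceil>..<N}. 1 / real (Suc n))"
proof -
  define M where "M = nat \<lceil>sqrt (real N)\<rceil>"
  have sqrt_ge: "sqrt (real N) \<ge> 4" using assms real_sqrt_le_mono[of 16 "real N"] by simp
  have ln_ge: "ln (real N) \<ge> 4 * ln 2"
    using assms ln_realpow[of 2 4] ln_le_cancel_iff[of "2 ^ 4" "real N"] by simp
  have M: "real M + 1 \<le> 2 * sqrt (real N)" unfolding M_def using sqrt_ge by linarith
  have "sqrt (real N) * 4 \<le> sqrt (real N) * sqrt (real N)" using sqrt_ge by (intro mult_left_mono) auto
  then have "M \<le> N" using M sqrt_ge by simp
  have "ln (real M + 1) \<le> ln (2 * sqrt (real N))" using M assms by (subst ln_le_cancel_iff) auto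
  also have "\<dots> = ln 2 + ln (real N) / 2" using assms by (simp add: ln_mult ln_sqrt)
  moreover have "ln (real N) \<le> ln (real N + 1)" using assms by simp
  ultimately show ?thesis
    using ln_diff_le_sum_inverse_Suc[OF \<open>M \<le> N\<close>] ln_ge unfolding M_def by linarith
qed

lemma sum_inverse_sqrt_ge_sum_by_parts_tail:
  "(\<Sum>n\<in>{M..<N}. card (P \<inter> {1..n}) * (1 / sqrt (real n) - 1 / sqrt (real (Suc n))))
     \<le> (\<Sum>p\<in>P \<inter> {1..N}. 1 / sqrt (real p))"
proof -
  define f where "f = (\<lambda>n::nat. 1 / sqrt (real n))"
  have nonneg: "0 \<le> card (P \<inter> {1..n}) * (f n - f (Suc n))" for n
  proof (cases "n = 0")
    case False
    then have "f (Suc n) \<le> f n" unfolding f_def by (intro divide_left_mono) auto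
    then show ?thesis by simp
  qed (simp add: f_def)
  have "(\<Sum>n\<in>{M..<N}. card (P \<inter> {1..n}) * (f n - f (Suc n)))
      \<le> (\<Sum>n<N. card (P \<inter> {1..n}) * (f n - f (Suc n)))"
    using nonneg by (intro sum_mono2) auto
  also have "\<dots> \<le> (\<Sum>p\<in>P \<inter> {1..N}. f p)"
    unfolding sum_by_parts_count by (simp add: f_def)
  finally show ?thesis by (simp add: f_def)
qed

lemma inverse_sqrt_diff_weighted_ge:
  fixes n N :: nat and A c \<alpha> :: real
  assumes "c \<ge> 0" "3 \<le> n" "sqrt (real N) \<le> real n" "n \<le> N"
    and A: "c * sqrt (real n) / ln (real n) powr \<alpha> \<le> A"
  shows "c / (2 * max 1 (2 powr (-\<alpha>))) * ln (real N) powr (-\<alpha>) / real (Suc n)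
           \<le> A * (1 / sqrt (real n) - 1 / sqrt (real (Suc n)))"
proof -
  define Ma where "Ma = max 1 (2 powr (-\<alpha>))"
  have ln_n: "ln (real n) > 0" and ln_N: "ln (real N) > 0" using assms by auto
  have "ln (real N) / 2 \<le> ln (real n)"
    using assms ln_le_cancel_iff[of "sqrt (real N)" "real n"] by (simp add: ln_sqrt)
  then have "ln (real n) powr \<alpha> \<le> Ma * ln (real N) powr \<alpha>"
    unfolding Ma_def using assms ln_N by (intro powr_le_max_powr_of_half_le) auto
  then have "c / (2 * real (Suc n) * (Ma * ln (real N) powr \<alpha>))
      \<le> c / (2 * real (Suc n) * ln (real n) powr \<alpha>)"
    using assms ln_n by (intro divide_left_mono mult_pos_pos) (auto simp: Ma_def)
  also have "\<dots> = c * sqrt (real n) / ln (real n) powr \<alpha> * (1 / (2 * real (Suc n) * sqrt (real n)))"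
    using assms by simp
  also have "\<dots> \<le> A * (1 / sqrt (real n) - 1 / sqrt (real (Suc n)))"
    using A inverse_sqrt_diff_ge[of n] assms order_trans[OF _ A]
    by (intro mult_mono) auto
  finally show ?thesis
    unfolding Ma_def by (simp add: powr_minus field_simps)
qed

text \<open>Only the part \<surd>N \<le> n \<le> N of the partial summation is kept: there
  (ln n)^\<alpha> is comparable to (ln N)^\<alpha>, and the harmonic sum over that range is at least (ln N)/4.\<close>
lemma sum_inverse_sqrt_ge_of_count_upto_ge:
  assumes "c \<ge> 0"
    and "\<forall>\<^sub>F X in at_top. c * sqrt X / ln X powr \<alpha> \<le> real (count_upto P X)"
  shows "\<forall>\<^sub>F N in sequentially.
           c / (8 * max 1 (2 powr (-\<alpha>))) * ln (real N) powr (1 - \<alpha>) \<le> (\<Sum>p\<in>P \<inter> {1..N}. 1 / sqrt (real p))"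
proof -
  obtain X0 where X0: "\<And>X. X \<ge> X0 \<Longrightarrow> c * sqrt X / ln X powr \<alpha> \<le> real (count_upto P X)"
    using assms(2) by (auto simp: eventually_at_top_linorder)
  define n0 where "n0 = max 3 (nat \<lceil>X0\<rceil>)"
  have "c / (8 * max 1 (2 powr (-\<alpha>))) * ln (real N) powr (1 - \<alpha>) \<le> (\<Sum>p\<in>P \<inter> {1..N}. 1 / sqrt (real p))"
    if N: "N \<ge> max 16 (n0 * n0)" for N
  proof -
    define M where "M = nat \<lceil>sqrt (real N)\<rceil>"
    define K where "K = c / (2 * max 1 (2 powr (-\<alpha>))) * ln (real N) powr (-\<alpha>)"
    have "real (n0 * n0) \<le> real N" using N by (simp only: of_nat_le_iff)
    then have "real n0 \<le> sqrt (real N)"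
      using real_sqrt_le_mono[of "real (n0 * n0)" "real N"] by simp
    then have M: "M \<ge> n0" "sqrt (real N) \<le> real M" unfolding M_def by linarith+
    have ln_N: "ln (real N) > 0" using N by simp
    have weighted: "K / real (Suc n) \<le> card (P \<inter> {1..n}) * (1 / sqrt (real n) - 1 / sqrt (real (Suc n)))"
      if "n \<in> {M..<N}" for n
      unfolding K_def using that M assms(1) X0[of "real n"] n0_def
      by (intro inverse_sqrt_diff_weighted_ge) (auto simp: count_upto_of_nat)
    have "c / (8 * max 1 (2 powr (-\<alpha>))) * ln (real N) powr (1 - \<alpha>) = K * (ln (real N) / 4)"
      using ln_N by (simp add: K_def powr_diff powr_minus field_simps)
    also have "\<dots> \<le> K * (\<Sum>n\<in>{M..<N}. 1 / real (Suc n))"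
      using sum_inverse_Suc_from_sqrt_ge[of N] N assms(1) unfolding K_def M_def
      by (intro mult_left_mono) auto
    also have "\<dots> \<le> (\<Sum>n\<in>{M..<N}. card (P \<inter> {1..n}) * (1 / sqrt (real n) - 1 / sqrt (real (Suc n))))"
      unfolding sum_distrib_left by (rule sum_mono) (use weighted in simp)
    also have "\<dots> \<le> (\<Sum>p\<in>P \<inter> {1..N}. 1 / sqrt (real p))"
      by (rule sum_inverse_sqrt_ge_sum_by_parts_tail)
    finally show ?thesis .
  qed
  then show ?thesis unfolding eventually_sequentially by blast
qed

lemma count_upto_div_ge:
  fixes p :: nat and C \<beta> X Z0 :: real
  assumes "C \<ge> 0" and count_Q: "\<forall>Z\<ge>Z0. C * sqrt Z * ln Z powr \<beta> \<le> real (count_upto Q Z)"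
    and "1 \<le> p" "real p \<le> sqrt X" "Z0 \<le> sqrt X" "1 < sqrt X"
  shows "C * min 1 (2 powr (-\<beta>)) * sqrt X * ln X powr \<beta> / sqrt (real p)
           \<le> real (count_upto Q (X / real p))"
proof -
  have X: "X > 1" using assms(6) by simp
  have "X / sqrt X \<le> X / real p" using assms(3,4) X by (intro divide_left_mono) auto
  then have Xp: "sqrt X \<le> X / real p" using X by (simp add: real_div_sqrt)
  have Xp_pos: "X / real p > 0" using X assms(3) by simp
  have "X / real p \<le> X" using X assms(3) by (simp add: divide_le_eq)
  then have "ln (X / real p) \<le> ln X" using Xp_pos by simp
  moreover have "ln X / 2 \<le> ln (X / real p)"
    using Xp Xp_pos X ln_le_cancel_iff[of "sqrt X" "X / real p"] by (simp add: ln_sqrt)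
  ultimately have "min 1 (2 powr (-\<beta>)) * ln X powr \<beta> \<le> ln (X / real p) powr \<beta>"
    using X by (intro min_powr_le_powr_of_half_le) auto
  then have "C * sqrt (X / real p) * (min 1 (2 powr (-\<beta>)) * ln X powr \<beta>)
      \<le> C * sqrt (X / real p) * ln (X / real p) powr \<beta>"
    using assms(1) Xp_pos by (intro mult_left_mono) auto
  also have "\<dots> \<le> real (count_upto Q (X / real p))"
    using count_Q Xp assms(5) by (meson order_trans)
  finally show ?thesis by (simp add: real_sqrt_divide mult_ac)
qed

lemma ln_nat_floor_sqrt_ge:
  fixes X :: real
  assumes "X \<ge> 256"
  shows "ln X / 4 \<le> ln (real (nat \<lfloor>sqrt X\<rfloor>))"
proof -
  have sqrt_X: "sqrt X \<ge> 16" using assms real_sqrt_le_mono[of 256 X] by simp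
  have ln_X: "ln X \<ge> 4 * ln 2"
    using assms ln_realpow[of 2 4] ln_le_cancel_iff[of "2 ^ 4" X] by simp
  have "sqrt X / 2 \<le> real (nat \<lfloor>sqrt X\<rfloor>)" using sqrt_X by linarith
  then have "ln (sqrt X / 2) \<le> ln (real (nat \<lfloor>sqrt X\<rfloor>))"
    using sqrt_X assms by (subst ln_le_cancel_iff) auto
  moreover have "ln (sqrt X / 2) = ln X / 2 - ln 2" using assms by (simp add: ln_div ln_sqrt)
  ultimately show ?thesis using ln_X by linarith
qed

lemma count_upto_setmul_ge:
  fixes C d \<alpha> \<beta> :: real
  assumes "\<alpha> < 1" "C \<ge> 0" "d \<ge> 0"
    and primes: "\<forall>p\<in>P. prime p"
    and factors: "\<forall>n\<in>setmul P Q. card (prime_factors n) \<le> m"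
    and count_Q: "\<forall>\<^sub>F Z in at_top. C * sqrt Z * ln Z powr \<beta> \<le> real (count_upto Q Z)"
    and sum_P: "\<forall>\<^sub>F N in sequentially. d * ln (real N) powr (1 - \<alpha>) \<le> (\<Sum>p\<in>P \<inter> {1..N}. 1 / sqrt (real p))"
  shows "\<forall>\<^sub>F X in at_top. C * min 1 (2 powr (-\<beta>)) * d / 4 powr (1 - \<alpha>) * sqrt X * ln X powr (\<beta> + 1 - \<alpha>)
           \<le> real m * real (count_upto (setmul P Q) X)"
proof -
  obtain Z0 where Z0: "\<forall>Z\<ge>Z0. C * sqrt Z * ln Z powr \<beta> \<le> real (count_upto Q Z)"
    using count_Q by (auto simp: eventually_at_top_linorder)
  obtain N0 where N0: "\<And>N. N \<ge> N0 \<Longrightarrow> d * ln (real N) powr (1 - \<alpha>) \<le> (\<Sum>p\<in>P \<inter> {1..N}. 1 / sqrt (real p))"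
    using sum_P by (auto simp: eventually_sequentially)
  have "C * min 1 (2 powr (-\<beta>)) * d / 4 powr (1 - \<alpha>) * sqrt X * ln X powr (\<beta> + 1 - \<alpha>)
          \<le> real m * real (count_upto (setmul P Q) X)"
    if X: "X \<ge> max (max 256 (Z0\<^sup>2)) ((real N0 + 1)\<^sup>2)" for X
  proof -
    define N where "N = nat \<lfloor>sqrt X\<rfloor>"
    define K where "K = C * min 1 (2 powr (-\<beta>)) * sqrt X * ln X powr \<beta>"
    have sqrt_X: "sqrt X \<ge> 16" "sqrt X \<ge> Z0" "sqrt X \<ge> real N0 + 1"
      using X by (auto intro!: real_le_rsqrt)
    have N: "real N \<le> sqrt X" "N \<ge> N0" unfolding N_def using sqrt_X by linarith+
    have ln_X: "ln X > 0" using X by simp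
    have K_nonneg: "K \<ge> 0" unfolding K_def using assms(2) X by simp
    have "d * (ln X / 4) powr (1 - \<alpha>) \<le> d * ln (real N) powr (1 - \<alpha>)"
      using ln_nat_floor_sqrt_ge[of X] X ln_X assms(1,3) unfolding N_def
      by (intro mult_left_mono powr_mono2) auto
    also have "\<dots> \<le> (\<Sum>p\<in>P \<inter> {1..N}. 1 / sqrt (real p))" using N0 N(2) by blast
    finally have "K * (d * (ln X / 4) powr (1 - \<alpha>)) \<le> K * (\<Sum>p\<in>P \<inter> {1..N}. 1 / sqrt (real p))"
      using K_nonneg by (rule mult_left_mono)
    also have "\<dots> = (\<Sum>p\<in>P \<inter> {1..N}. K / sqrt (real p))"
      by (simp add: sum_distrib_left)
    also have "\<dots> \<le> (\<Sum>p\<in>P \<inter> {1..N}. real (count_upto Q (X / real p)))"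
      unfolding K_def using N(1) sqrt_X X
      by (intro sum_mono count_upto_div_ge[OF assms(2) Z0]) auto
    also have "\<dots> \<le> real m * real (count_upto (setmul P Q) X)"
      using sum_count_upto_le_count_upto_setmul[OF primes factors, of "P \<inter> {1..N}" X]
      by (simp flip: of_nat_sum of_nat_mult)
    finally have bound: "K * (d * (ln X / 4) powr (1 - \<alpha>)) \<le> real m * real (count_upto (setmul P Q) X)" .
    have split_exponent: "ln X powr (\<beta> + 1 - \<alpha>) = ln X powr \<beta> * ln X powr (1 - \<alpha>)"
      unfolding powr_add[symmetric] by (simp add: algebra_simps)
    have quarter: "(ln X / 4) powr (1 - \<alpha>) = ln X powr (1 - \<alpha>) / 4 powr (1 - \<alpha>)"
      using ln_X by (simp add: powr_divide)
    have "C * min 1 (2 powr (-\<beta>)) * d / 4 powr (1 - \<alpha>) * sqrt X * ln X powr (\<beta> + 1 - \<alpha>)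
        = K * (d * (ln X / 4) powr (1 - \<alpha>))"
      unfolding K_def split_exponent quarter
      by (simp only: times_divide_eq_right times_divide_eq_left mult_ac)
    then show ?thesis using bound by (simp only:)
  qed
  then show ?thesis unfolding eventually_at_top_linorder by blast
qed

lemma count_upto_setpow_ge:
  fixes \<alpha> c :: real
  assumes "\<alpha> < 1" "c > 0" "k \<ge> 1"
  shows "\<exists>C>0. \<forall>P :: nat set. (\<forall>p\<in>P. prime p) \<longrightarrow>
     (\<forall>\<^sub>F X in at_top. c * sqrt X / ln X powr \<alpha> \<le> real (count_upto P X)) \<longrightarrow>
     (\<forall>\<^sub>F X in at_top. C * sqrt X * ln X powr (real k - 1 - real k * \<alpha>) \<le> real (count_upto (setpow P k) X))"
  using assms(3)
proof (induction k rule: dec_induct)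
  case base
  show ?case
    unfolding setpow_one by (intro exI[of _ c] conjI allI impI assms(2)) (simp add: powr_minus_divide)
next
  case (step j)
  then obtain C where "C > 0" and IH: "\<forall>P :: nat set. (\<forall>p\<in>P. prime p) \<longrightarrow>
     (\<forall>\<^sub>F X in at_top. c * sqrt X / ln X powr \<alpha> \<le> real (count_upto P X)) \<longrightarrow>
     (\<forall>\<^sub>F X in at_top. C * sqrt X * ln X powr (real j - 1 - real j * \<alpha>) \<le> real (count_upto (setpow P j) X))"
    by blast
  define \<beta> where "\<beta> = real j - 1 - real j * \<alpha>"
  define d where "d = c / (8 * max 1 (2 powr (-\<alpha>)))"
  define B where "B = C * min 1 (2 powr (-\<beta>)) * d / 4 powr (1 - \<alpha>)"
  have "B / real (Suc j) > 0" unfolding B_def d_def using \<open>C > 0\<close> assms(2) by simp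
  moreover have "\<forall>\<^sub>F X in at_top. B / real (Suc j) * sqrt X * ln X powr (real (Suc j) - 1 - real (Suc j) * \<alpha>)
      \<le> real (count_upto (setpow P (Suc j)) X)"
    if primes: "\<forall>p\<in>P. prime p"
      and count_P: "\<forall>\<^sub>F X in at_top. c * sqrt X / ln X powr \<alpha> \<le> real (count_upto P X)" for P
  proof -
    have factors: "\<forall>n\<in>setmul P (setpow P j). card (prime_factors n) \<le> Suc j"
      using card_prime_factors_setpow_le[OF primes, of _ "Suc j"] by simp
    have count_Q: "\<forall>\<^sub>F X in at_top. C * sqrt X * ln X powr \<beta> \<le> real (count_upto (setpow P j) X)"
      using IH primes count_P unfolding \<beta>_def by blast
    have sum_P: "\<forall>\<^sub>F N in sequentially. d * ln (real N) powr (1 - \<alpha>) \<le> (\<Sum>p\<in>P \<inter> {1..N}. 1 / sqrt (real p))"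
      unfolding d_def using sum_inverse_sqrt_ge_of_count_upto_ge[OF _ count_P] assms(2) by simp
    have exponent: "\<beta> + 1 - \<alpha> = real (Suc j) - 1 - real (Suc j) * \<alpha>"
      unfolding \<beta>_def by (simp add: algebra_simps)
    have "\<forall>\<^sub>F X in at_top. B * sqrt X * ln X powr (real (Suc j) - 1 - real (Suc j) * \<alpha>)
        \<le> real (Suc j) * real (count_upto (setpow P (Suc j)) X)"
      using count_upto_setmul_ge[OF assms(1) _ _ primes factors count_Q sum_P] \<open>C > 0\<close> assms(2)
      unfolding B_def d_def exponent by simp
    then show ?thesis
      by (elim eventually_mono) (simp add: pos_divide_le_eq mult.commute mult.left_commute)
  qed
  ultimately show ?case by blast
qed

theorem corollary2p5:
  fixes \<alpha> c :: real and k :: nat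
  assumes "\<alpha> < 1" and "c > 0" and "k \<ge> 2"
  shows "\<exists>c1 > 0. \<forall>P1 :: nat set.
           (\<forall>p\<in>P1. prime p) \<longrightarrow>
           (\<forall>\<^sub>F X in at_top. real (count_upto P1 X) \<ge> c * sqrt X / (ln X) powr \<alpha>) \<longrightarrow>
           (\<forall>\<^sub>F X in at_top. real (count_upto (setpow P1 k) X)
                \<ge> c1 * sqrt X * (ln X) powr (real k - 1 - real k * \<alpha>))"
  using count_upto_setpow_ge[OF assms(1,2), of k] assms(3) by simp

end
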